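(* Let $(\mathbf X_1,\mathbf Y_1)$ and $(\mathbf X_2,\mathbf Y_2)$ be general correlated sources, both uniformly integrable, and let $(\mathbf X,\mathbf Y)$ be their mixture $P_{X^nY^n}=\alpha_1P_{X_1^nY_1^n}+\alpha_2P_{X_2^nY_2^n}$ with constants $\alpha_1,\alpha_2>0$, $\alpha_1+\alpha_2=1$. Then \[\overline H_s(\mathbf X|\mathbf Y)\ge\lim_{\varepsilon\downarrow0}\limsup_{n\to\infty}\sum_{i=1,2}\frac{\alpha_i}{n}\overline H_s^\varepsilon(X_i^n|Y_i^n).\]
   Context: A general correlated source $\{(X^n,Y^n)\}_{n\ge1}$ is an arbitrary sequence of pairs of random variables on $\mathcal X^n\times\mathcal Y^n$, $\mathcal X,\mathcal Y$ finite or countably infinite (no structural assumptions; marginal probabilities positive). Logs base 2. A source is uniformly integrable if $Z_n=\frac1n\log\frac1{P_{X^n|Y^n}(X^n|Y^n)}$ satisfies $\lim_{u\to\infty}\sup_n\sum_{z:|z|\ge u}P_{Z_n}(z)|z|=0$. For a source with distributions $P_{X^nY^n}$, $x^n\in\mathcal X^n$ and $\varepsilon\in(0,1]$: $\overline h^\varepsilon(x^n|P_{X^nY^n})=\inf\{a\in\mathbb R:\sum_{y^n:\log(1/P_{X^n|Y^n}(x^n|y^n))>a}P_{Y^n|X^n}(y^n|x^n)\le\varepsilon\}$; $\overline H_s^\varepsilon(X^n|Y^n)=\sum_{x^n}P_{X^n}(x^n)\overline h^\varepsilon(x^n|P_{X^nY^n})$ (and analogously $\overline H_s^\varepsilon(X_i^n|Y_i^n)$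 using $P_{X_i^nY_i^n}$); $\overline H_s(\mathbf X|\mathbf Y)=\lim_{\varepsilon\downarrow0}\limsup_n\frac1n\overline H_s^\varepsilon(X^n|Y^n)$. *)

theory Defs
  imports "HOL-Probability.Probability" "HOL-Library.Countable"
begin

text \<open>A joint distribution of (X^n, Y^n) is a pmf on pairs of lists; the alphabets are the
  countable types 'a and 'b (finite or countably infinite).\<close>

definition condXY :: "('a \<times> 'b) pmf \<Rightarrow> 'a \<Rightarrow> 'b \<Rightarrow> real" where
  "condXY p x y = pmf p (x, y) / pmf (map_pmf snd p) y"

definition condYX :: "('a \<times> 'b) pmf \<Rightarrow> 'b \<Rightarrow> 'a \<Rightarrow> real" where
  "condYX p y x = pmf p (x, y) / pmf (map_pmf fst p) x"

definition hbar :: "real \<Rightarrow> ('a \<times> 'b) pmf \<Rightarrow> 'a \<Rightarrow> real" where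
  "hbar \<epsilon> p x = Inf {a :: real.
     (\<Sum>\<^sub>\<infinity> y \<in> {y. log 2 (1 / condXY p x y) > a}. condYX p y x) \<le> \<epsilon>}"

definition Hs_eps :: "real \<Rightarrow> ('a \<times> 'b) pmf \<Rightarrow> ennreal" where
  "Hs_eps \<epsilon> p = (\<Sum>\<^sub>\<infinity> x. ennreal (pmf (map_pmf fst p) x * hbar \<epsilon> p x))"

definition Hs :: "(nat \<Rightarrow> ('a \<times> 'b) pmf) \<Rightarrow> ennreal" where
  "Hs P = Lim (at_right 0) (\<lambda>\<epsilon>. limsup (\<lambda>n. ennreal (1 / real n) * Hs_eps \<epsilon> (P n)))"

definition general_source :: "(nat \<Rightarrow> ('a list \<times> 'b list) pmf) \<Rightarrow> bool" where
  "general_source P \<longleftrightarrow>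
     (\<forall>n. \<forall>(x, y) \<in> set_pmf (P n). length x = n \<and> length y = n) \<and>
     (\<forall>n x. length x = n \<longrightarrow> pmf (map_pmf fst (P n)) x > 0) \<and>
     (\<forall>n y. length y = n \<longrightarrow> pmf (map_pmf snd (P n)) y > 0)"

definition Zdist :: "(nat \<Rightarrow> ('a \<times> 'b) pmf) \<Rightarrow> nat \<Rightarrow> real pmf" where
  "Zdist P n = map_pmf (\<lambda>(x, y). (1 / real n) * log 2 (1 / condXY (P n) x y)) (P n)"

definition unif_integrable :: "(nat \<Rightarrow> ('a \<times> 'b) pmf) \<Rightarrow> bool" where
  "unif_integrable P \<longleftrightarrow>
     ((\<lambda>u::real. SUP n\<in>{1..}. \<Sum>\<^sub>\<infinity> z \<in> {z. \<bar>z\<bar> \<ge> u}. ennreal (pmf (Zdist P n) z * \<bar>z\<bar>))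
        \<longlongrightarrow> 0) at_top"

end

theory Submission
  imports Defs
begin

text \<open>The bound is proved for each \<open>x\<close> separately. If component \<open>i\<close> carries at least a
  fraction \<open>\<tau>\<close> of the mass \<open>P\<^sub>X(x)\<close>, then outside the set of \<open>y\<close> on which the other
  component dominates it by the factor \<open>K = 2 / (\<tau> \<epsilon>)\<close>, the mixture raises
  \<open>P\<^sub>X\<^sub>|\<^sub>Y(x | y)\<close> by at most the factor \<open>1 + K\<close>; this costs \<open>log (1 + K)\<close> in the
  quantile \<open>hbar\<close> and replaces \<open>\<epsilon>\<close> by \<open>\<tau> \<epsilon> / 2\<close>. The remaining \<open>x\<close> have total mass at
  most \<open>\<tau> / \<alpha>\<^sub>i\<close> under component \<open>i\<close>, so by Markov's inequality their share of
  \<open>H\<^sub>s\<^sup>\<epsilon>(X\<^sub>i\<^sup>n | Y\<^sub>i\<^sup>n) / n\<close> is at most \<open>u \<tau> / \<epsilon>\<close> plus the tail of \<open>Z\<^sub>n\<close> beyond \<open>u\<close>;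
  uniform integrability makes that tail small uniformly in \<open>n\<close>, and then \<open>\<tau>\<close> is taken small.\<close>

section \<open>Unordered sums of extended nonnegative reals\<close>

lemma infsum_cmult_left_ennreal:
  fixes f :: "'c \<Rightarrow> ennreal"
  shows "(\<Sum>\<^sub>\<infinity> x\<in>A. c * f x) = c * infsum f A"
proof -
  have "c * infsum f A = (SUP F\<in>{F. finite F \<and> F \<subseteq> A}. c * sum f F)"
    by (subst nonneg_infsum_complete) (auto simp: SUP_mult_left_ennreal)
  also have "\<dots> = (\<Sum>\<^sub>\<infinity> x\<in>A. c * f x)"
    by (subst nonneg_infsum_complete) (auto simp: sum_distrib_left)
  finally show ?thesis ..
qed

lemma infsum_mono_ennreal:
  fixes f g :: "'c \<Rightarrow> ennreal"
  assumes "A \<subseteq> B" "\<And>x. x \<in> A \<Longrightarrow> f x \<le> g x"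
  shows "infsum f A \<le> infsum g B"
  using assms by (intro infsum_mono_neutral) (auto intro: nonneg_summable_on_complete)

lemma infsum_add_ennreal:
  fixes f g :: "'c \<Rightarrow> ennreal"
  shows "(\<Sum>\<^sub>\<infinity> x\<in>A. f x + g x) = infsum f A + infsum g A"
  by (intro infsum_add nonneg_summable_on_complete) simp_all

lemma infsum_if_ennreal:
  fixes f :: "'c \<Rightarrow> ennreal"
  shows "(\<Sum>\<^sub>\<infinity> x. if x \<in> S then f x else 0) = infsum f S"
  by (rule infsum_cong_neutral) auto

lemma ennreal_plus_le: "ennreal (u + v) \<le> ennreal u + ennreal v"
  by (cases "u \<ge> 0"; cases "v \<ge> 0") (auto simp: ennreal_plus ennreal_neg ennreal_leI)

lemma ennreal_infsum:
  fixes f :: "'c \<Rightarrow> real"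
  assumes "f summable_on A" "\<And>x. x \<in> A \<Longrightarrow> f x \<ge> 0"
  shows "ennreal (infsum f A) = (\<Sum>\<^sub>\<infinity> x\<in>A. ennreal (f x))"
proof -
  have "sum (ennreal \<circ> f) F = ennreal (sum f F)" if "finite F" "F \<subseteq> A" for F
    using that assms(2) by (metis comp_def subsetD sum.cong sum_ennreal)
  then have "ennreal (infsum f A) = infsum (ennreal \<circ> f) A"
    by (simp add: infsum_comm_additive_general assms(1))
  then show ?thesis by (simp add: o_def)
qed

lemma linear_continuum_topology_t3:
  fixes S :: "'c::linear_continuum_topology set"
  assumes "closed S" "y \<notin> S"
  shows "\<exists>U V. open U \<and> open V \<and> y \<in> U \<and> S \<subseteq> V \<and> U \<inter> V = {}"
proof -
  have T: "open (-S)" "y \<in> -S" using assms by auto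
  obtain LU LV where L: "open LU" "open LV" "y \<in> LU" "LU \<inter> LV = {}"
    "\<And>s. s \<in> S \<Longrightarrow> s < y \<Longrightarrow> s \<in> LV"
  proof (cases "\<exists>z. z < y")
    case True
    then obtain a where a: "a < y" "{a<..y} \<subseteq> -S" using open_left[OF T] by blast
    then obtain a' where a': "a < a'" "a' < y" using dense by blast
    show ?thesis
    proof (rule that[of "{a'<..}" "{..<a'}"])
      fix s assume "s \<in> S" "s < y"
      with a have "s \<le> a" by (meson ComplD greaterThanAtMost_iff less_le_not_le not_le_imp_less subsetD)
      with a' show "s \<in> {..<a'}" by simp
    qed (use a' in auto)
  qed (rule that[of UNIV "{}"], auto)
  obtain RU RV where R: "open RU" "open RV" "y \<in> RU" "RU \<inter> RV = {}"
    "\<And>s. s \<in> S \<Longrightarrow> y < s \<Longrightarrow> s \<in> RV"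
  proof (cases "\<exists>z. y < z")
    case True
    then obtain b where b: "b > y" "{y..<b} \<subseteq> -S" using open_right[OF T] by blast
    then obtain b' where b': "y < b'" "b' < b" using dense by blast
    show ?thesis
    proof (rule that[of "{..<b'}" "{b'<..}"])
      fix s assume "s \<in> S" "y < s"
      with b have "s \<ge> b" by (meson ComplD atLeastLessThan_iff less_le_not_le not_le_imp_less subsetD)
      with b' show "s \<in> {b'<..}" by simp
    qed (use b' in auto)
  qed (rule that[of UNIV "{}"], auto)
  have "S \<subseteq> LV \<union> RV"
    using L(5) R(5) assms(2) by (metis UnI1 UnI2 linorder_neqE subsetI)
  with L R show ?thesis
    by (intro exI[of _ "LU \<inter> RU"] exI[of _ "LV \<union> RV"]) auto
qed

text \<open>Regularity of the codomain is what \<open>has_sum_SigmaD\<close> (Fubini for unordered sums) needs.\<close>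

instance ennreal :: t3_space
  by standard (rule linear_continuum_topology_t3)

lemma infsum_Sigma_ennreal:
  fixes g :: "'c \<times> 'd \<Rightarrow> ennreal"
  shows "infsum g (Sigma A B) = (\<Sum>\<^sub>\<infinity> x\<in>A. \<Sum>\<^sub>\<infinity> y\<in>B x. g (x, y))"
proof -
  have "((\<lambda>x. \<Sum>\<^sub>\<infinity> y\<in>B x. g (x, y)) has_sum infsum g (Sigma A B)) A"
    by (rule has_sum_SigmaD[where f = g and B = B])
      (auto intro!: has_sum_infsum nonneg_summable_on_complete)
  then show ?thesis by (simp add: infsumI)
qed

section \<open>Probability mass functions and their fibres\<close>

lemma summable_on_pmf: "pmf p summable_on A"
  by (metis abs_summable_equivalent abs_summable_summable pmf_abs_summable)

lemma measure_pmf_eq_infsum: "measure (measure_pmf p) A = (\<Sum>\<^sub>\<infinity> w\<in>A. pmf p w)"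
  by (simp add: measure_pmf_conv_infsetsum infsetsum_infsum pmf_abs_summable)

lemma ennreal_measure_pmf_eq_infsum:
  "ennreal (measure (measure_pmf p) A) = (\<Sum>\<^sub>\<infinity> w\<in>A. ennreal (pmf p w))"
  by (simp add: measure_pmf_eq_infsum ennreal_infsum summable_on_pmf)

lemma infsum_pmf_ennreal: "(\<Sum>\<^sub>\<infinity> w. ennreal (pmf p w)) = 1"
  using ennreal_measure_pmf_eq_infsum[of p UNIV] by simp

lemma infsum_pmf_mult_ennreal:
  assumes "c \<ge> 0"
  shows "(\<Sum>\<^sub>\<infinity> w. ennreal (pmf p w * c)) = ennreal c"
  using assms by (simp add: ennreal_mult'' mult.commute infsum_cmult_left_ennreal infsum_pmf_ennreal)

lemma infsum_pushforward_abs: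
  fixes q :: "'c pmf" and f :: "'c \<Rightarrow> real"
  shows "(\<Sum>\<^sub>\<infinity> z\<in>A. ennreal (pmf (map_pmf f q) z * \<bar>z\<bar>)) = (\<Sum>\<^sub>\<infinity> w\<in>f -` A. ennreal (pmf q w * \<bar>f w\<bar>))"
proof -
  have "(\<Sum>\<^sub>\<infinity> z\<in>A. ennreal (pmf (map_pmf f q) z * \<bar>z\<bar>))
      = (\<Sum>\<^sub>\<infinity> z\<in>A. ennreal \<bar>z\<bar> * ennreal (measure (measure_pmf q) (f -` {z})))"
    by (intro infsum_cong) (simp add: pmf_map ennreal_mult' mult.commute)
  also have "\<dots> = (\<Sum>\<^sub>\<infinity> z\<in>A. \<Sum>\<^sub>\<infinity> w\<in>f -` {z}. ennreal \<bar>z\<bar> * ennreal (pmf q w))"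
    by (simp add: ennreal_measure_pmf_eq_infsum infsum_cmult_left_ennreal)
  also have "\<dots> = (\<Sum>\<^sub>\<infinity> zw\<in>Sigma A (\<lambda>z. f -` {z}). ennreal \<bar>fst zw\<bar> * ennreal (pmf q (snd zw)))"
    by (simp add: infsum_Sigma_ennreal)
  also have "Sigma A (\<lambda>z. f -` {z}) = (\<lambda>w. (f w, w)) ` (f -` A)" by auto
  also have "(\<Sum>\<^sub>\<infinity> zw\<in>(\<lambda>w. (f w, w)) ` (f -` A). ennreal \<bar>fst zw\<bar> * ennreal (pmf q (snd zw)))
      = (\<Sum>\<^sub>\<infinity> w\<in>f -` A. ennreal \<bar>f w\<bar> * ennreal (pmf q w))"
    by (subst infsum_reindex) (auto simp: inj_on_def o_def)
  also have "\<dots> = (\<Sum>\<^sub>\<infinity> w\<in>f -` A. ennreal (pmf q w * \<bar>f w\<bar>))"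
    by (intro infsum_cong) (simp add: ennreal_mult' mult.commute)
  finally show ?thesis .
qed

lemma infsum_fibres_le_pushforward:
  fixes q :: "('c \<times> 'd) pmf" and f :: "'c \<times> 'd \<Rightarrow> real"
  shows "(\<Sum>\<^sub>\<infinity> x\<in>S. \<Sum>\<^sub>\<infinity> y. if f (x, y) \<in> A then ennreal (pmf q (x, y) * \<bar>f (x, y)\<bar>) else 0)
    \<le> (\<Sum>\<^sub>\<infinity> z\<in>A. ennreal (pmf (map_pmf f q) z * \<bar>z\<bar>))"
proof -
  have "(\<Sum>\<^sub>\<infinity> x\<in>S. \<Sum>\<^sub>\<infinity> y. if f (x, y) \<in> A then ennreal (pmf q (x, y) * \<bar>f (x, y)\<bar>) else 0)
      \<le> (\<Sum>\<^sub>\<infinity> x. \<Sum>\<^sub>\<infinity> y. if f (x, y) \<in> A then ennreal (pmf q (x, y) * \<bar>f (x, y)\<bar>) else 0)"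
    by (rule infsum_mono_ennreal) auto
  also have "\<dots> = (\<Sum>\<^sub>\<infinity> w. if w \<in> f -` A then ennreal (pmf q w * \<bar>f w\<bar>) else 0)"
    using infsum_Sigma_ennreal[of "\<lambda>w. if w \<in> f -` A then ennreal (pmf q w * \<bar>f w\<bar>) else 0" UNIV "\<lambda>_. UNIV"]
    by simp
  also have "\<dots> = (\<Sum>\<^sub>\<infinity> z\<in>A. ennreal (pmf (map_pmf f q) z * \<bar>z\<bar>))"
    unfolding infsum_if_ennreal infsum_pushforward_abs ..
  finally show ?thesis .
qed

lemma summable_on_pmf_fibre: "(\<lambda>y. pmf p (x, y)) summable_on B"
proof -
  have "pmf p summable_on (Pair x ` B)" by (rule summable_on_pmf)
  then show ?thesis by (subst (asm) summable_on_reindex) (auto simp: o_def inj_on_def)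
qed

lemma measure_pmf_fibre:
  "measure (measure_pmf p) (Pair x ` B) = (\<Sum>\<^sub>\<infinity> y\<in>B. pmf p (x, y))"
  by (simp add: measure_pmf_eq_infsum infsum_reindex inj_on_def o_def)

lemma ennreal_measure_pmf_fibre:
  "ennreal (measure (measure_pmf p) (Pair x ` B)) = (\<Sum>\<^sub>\<infinity> y\<in>B. ennreal (pmf p (x, y)))"
  by (simp add: ennreal_measure_pmf_eq_infsum infsum_reindex inj_on_def o_def)

lemma pmf_fst_eq_measure_fibre: "pmf (map_pmf fst p) x = measure (measure_pmf p) (Pair x ` UNIV)"
proof -
  have "fst -` {x} = Pair x ` UNIV" by auto
  then show ?thesis unfolding pmf_map by (rule arg_cong)
qed

lemma infsum_pmf_fibre: "(\<Sum>\<^sub>\<infinity> y. ennreal (pmf p (x, y))) = ennreal (pmf (map_pmf fst p) x)"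
  by (simp add: pmf_fst_eq_measure_fibre ennreal_measure_pmf_fibre)

lemma measure_fibre_le_pmf_fst: "measure (measure_pmf p) (Pair x ` B) \<le> pmf (map_pmf fst p) x"
  unfolding pmf_fst_eq_measure_fibre by (rule measure_pmf.finite_measure_mono) auto

lemma pmf_le_pmf_snd: "pmf p (x, y) \<le> pmf (map_pmf snd p) y"
proof -
  have "measure (measure_pmf p) {(x, y)} \<le> measure (measure_pmf p) (snd -` {y})"
    by (rule measure_pmf.finite_measure_mono) auto
  then show ?thesis by (simp add: measure_pmf_single pmf_map)
qed

section \<open>The quantile \<open>hbar\<close>\<close>

text \<open>\<open>cond_measure p x B\<close> is \<open>P\<^sub>Y\<^sub>|\<^sub>X(B | x)\<close>, and \<open>self_info p x y\<close> is
  \<open>log (1 / P\<^sub>X\<^sub>|\<^sub>Y(x | y))\<close>; thus \<open>hbar \<epsilon> p x\<close> is the smallest level that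
  \<open>self_info p x\<close> exceeds with conditional probability at most \<open>\<epsilon>\<close>.\<close>

definition cond_measure :: "('a \<times> 'b) pmf \<Rightarrow> 'a \<Rightarrow> 'b set \<Rightarrow> real" where
  "cond_measure p x B = measure (measure_pmf p) (Pair x ` B) / pmf (map_pmf fst p) x"

definition self_info :: "('a \<times> 'b) pmf \<Rightarrow> 'a \<Rightarrow> 'b \<Rightarrow> real" where
  "self_info p x y = log 2 (1 / condXY p x y)"

lemma hbar_eq_Inf: "hbar \<epsilon> p x = Inf {a. cond_measure p x {y. self_info p x y > a} \<le> \<epsilon>}"
proof -
  have "(\<Sum>\<^sub>\<infinity> y\<in>B. condYX p y x) = cond_measure p x B" for B
    unfolding condYX_def cond_measure_def measure_pmf_fibre
    by (simp add: divide_inverse infsum_cmult_left')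
  then show ?thesis unfolding hbar_def self_info_def by simp
qed

lemma cond_measure_mono: "B \<subseteq> C \<Longrightarrow> cond_measure p x B \<le> cond_measure p x C"
  unfolding cond_measure_def
  by (intro divide_right_mono measure_pmf.finite_measure_mono) auto

lemma self_info_nonneg:
  assumes "pmf p (x, y) > 0"
  shows "self_info p x y \<ge> 0"
proof -
  have "pmf p (x, y) \<le> pmf (map_pmf snd p) y" by (rule pmf_le_pmf_snd)
  with assms have "0 < condXY p x y" "condXY p x y \<le> 1" unfolding condXY_def by auto
  then show ?thesis unfolding self_info_def by simp
qed

lemma cond_measure_self_info_gt_neg:
  assumes "pmf (map_pmf fst p) x > 0" "a < 0"
  shows "cond_measure p x {y. self_info p x y > a} = 1"
proof -
  have "measure (measure_pmf p) (Pair x ` {y. self_info p x y > a})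
      = measure (measure_pmf p) (Pair x ` UNIV)"
  proof (rule measure_eq_AE)
    show "AE z in measure_pmf p. (z \<in> Pair x ` {y. self_info p x y > a}) = (z \<in> range (Pair x))"
    proof (rule AE_pmfI)
      fix z assume "z \<in> set_pmf p"
      then have "pmf p z > 0" by (simp add: pmf_positive)
      then show "(z \<in> Pair x ` {y. self_info p x y > a}) = (z \<in> range (Pair x))"
        using self_info_nonneg[of p x "snd z"] assms(2) by (cases z) auto
    qed
  qed auto
  then show ?thesis using assms(1) unfolding cond_measure_def pmf_fst_eq_measure_fibre by simp
qed

lemma hbar_set_nonneg:
  assumes "pmf (map_pmf fst p) x > 0" "\<epsilon> < 1"
    and "cond_measure p x {y. self_info p x y > a} \<le> \<epsilon>"
  shows "a \<ge> 0"
  using cond_measure_self_info_gt_neg[OF assms(1)] assms(2,3)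
  by (metis linorder_not_le order.strict_iff_not)

lemma hbar_set_nonempty:
  assumes "pmf (map_pmf fst p) x > 0" "\<epsilon> > 0"
  shows "\<exists>a. cond_measure p x {y. self_info p x y > a} \<le> \<epsilon>"
proof -
  define A where "A k = Pair x ` {y. self_info p x y > real k}" for k :: nat
  have "decseq A" unfolding A_def decseq_def by auto
  moreover have "(\<Inter>k. A k) = {}"
  proof safe
    fix z assume z: "z \<in> (\<Inter>k. A k)"
    then obtain y where "z = (x, y)" using A_def by auto
    moreover obtain k :: nat where "self_info p x y < real k" using reals_Archimedean2 by blast
    moreover have "z \<in> A k" using z by blast
    ultimately show "z \<in> {}" unfolding A_def by auto
  qed
  ultimately have "(\<lambda>k. measure (measure_pmf p) (A k)) \<longlonglongrightarrow> 0"
    using measure_pmf.finite_Lim_measure_decseq[of A] by auto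
  then have "(\<lambda>k. measure (measure_pmf p) (A k) / pmf (map_pmf fst p) x) \<longlonglongrightarrow> 0"
    by (rule tendsto_divide_zero)
  then have "eventually (\<lambda>k. measure (measure_pmf p) (A k) / pmf (map_pmf fst p) x < \<epsilon>) sequentially"
    using assms(2) by (rule order_tendstoD)
  then obtain k where "measure (measure_pmf p) (A k) / pmf (map_pmf fst p) x < \<epsilon>"
    by (metis eventually_sequentially order.refl)
  then show ?thesis unfolding A_def cond_measure_def by (intro exI[of _ "real k"]) simp
qed

lemma hbar_nonneg:
  assumes "pmf (map_pmf fst p) x > 0" "0 < \<epsilon>" "\<epsilon> < 1"
  shows "hbar \<epsilon> p x \<ge> 0"
  unfolding hbar_eq_Inf using hbar_set_nonempty[OF assms(1,2)] hbar_set_nonneg[OF assms(1,3)]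
  by (intro cInf_greatest) auto

lemma mult_hbar_nonneg:
  assumes "0 < \<epsilon>" "\<epsilon> < 1"
  shows "pmf (map_pmf fst p) x * hbar \<epsilon> p x \<ge> 0"
proof (cases "pmf (map_pmf fst p) x > 0")
  case False
  then have "pmf (map_pmf fst p) x = 0" using pmf_nonneg[of "map_pmf fst p" x] by linarith
  then show ?thesis by simp
qed (use hbar_nonneg[OF _ assms, of p x] in simp)

lemma cond_measure_gt_if_less_hbar:
  assumes "pmf (map_pmf fst p) x > 0" "\<epsilon> < 1" "a < hbar \<epsilon> p x"
  shows "cond_measure p x {y. self_info p x y > a} > \<epsilon>"
proof (rule ccontr)
  assume "\<not> ?thesis"
  moreover have "bdd_below {a. cond_measure p x {y. self_info p x y > a} \<le> \<epsilon>}"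
    using hbar_set_nonneg[OF assms(1,2)] by (intro bdd_belowI[of _ 0]) auto
  ultimately have "hbar \<epsilon> p x \<le> a" unfolding hbar_eq_Inf by (intro cInf_lower) auto
  with assms(3) show False by simp
qed

lemma hbar_geI:
  assumes "pmf (map_pmf fst p) x > 0" "\<epsilon> > 0"
    and "\<And>a. a < h \<Longrightarrow> cond_measure p x {y. self_info p x y > a} > \<epsilon>"
  shows "hbar \<epsilon> p x \<ge> h"
  unfolding hbar_eq_Inf
proof (rule cInf_greatest)
  show "{a. cond_measure p x {y. self_info p x y > a} \<le> \<epsilon>} \<noteq> {}"
    using hbar_set_nonempty[OF assms(1,2)] by auto
next
  fix s assume s: "s \<in> {a. cond_measure p x {y. self_info p x y > a} \<le> \<epsilon>}"
  show "h \<le> s"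
  proof (rule ccontr)
    assume "\<not> h \<le> s"
    then obtain a where a: "s < a" "a < h" using dense by (meson not_le)
    then have "cond_measure p x {y. self_info p x y > a} \<le> cond_measure p x {y. self_info p x y > s}"
      by (intro cond_measure_mono) auto
    with assms(3)[OF a(2)] s show False by simp
  qed
qed

lemma hbar_antimono:
  assumes "0 < \<epsilon>" "\<epsilon> \<le> \<epsilon>'" "\<epsilon>' < 1"
  shows "pmf (map_pmf fst p) x * hbar \<epsilon>' p x \<le> pmf (map_pmf fst p) x * hbar \<epsilon> p x"
proof (cases "pmf (map_pmf fst p) x > 0")
  case pos: True
  have "hbar \<epsilon>' p x \<le> hbar \<epsilon> p x"
    unfolding hbar_eq_Inf
  proof (rule cInf_superset_mono)
    show "{a. cond_measure p x {y. self_info p x y > a} \<le> \<epsilon>} \<noteq> {}"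
      using hbar_set_nonempty[OF pos assms(1)] by auto
    show "bdd_below {a. cond_measure p x {y. self_info p x y > a} \<le> \<epsilon>'}"
      using hbar_set_nonneg[OF pos assms(3)] by (intro bdd_belowI[of _ 0]) auto
  qed (use assms(2) in auto)
  with pos show ?thesis by (simp add: mult_left_mono)
next
  case False
  then have "pmf (map_pmf fst p) x = 0" using pmf_nonneg[of "map_pmf fst p" x] by linarith
  then show ?thesis by simp
qed

lemma Hs_eps_antimono:
  assumes "0 < \<epsilon>" "\<epsilon> \<le> \<epsilon>'" "\<epsilon>' < 1"
  shows "Hs_eps \<epsilon>' p \<le> Hs_eps \<epsilon> p"
  unfolding Hs_eps_def using hbar_antimono[OF assms] by (intro infsum_mono_ennreal ennreal_leI) auto

lemma hbar_markov_level:
  assumes pos: "pmf (map_pmf fst p) x > 0" and \<epsilon>: "\<epsilon> < 1" and a: "0 \<le> a" "a < hbar \<epsilon> p x"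
  shows "ennreal (\<epsilon> * pmf (map_pmf fst p) x * a) \<le> (\<Sum>\<^sub>\<infinity> y. ennreal (pmf p (x, y) * self_info p x y))"
proof -
  define G where "G = {y. self_info p x y > a}"
  have "cond_measure p x G > \<epsilon>" unfolding G_def by (rule cond_measure_gt_if_less_hbar[OF pos \<epsilon> a(2)])
  with pos have "\<epsilon> * pmf (map_pmf fst p) x < measure (measure_pmf p) (Pair x ` G)"
    unfolding cond_measure_def by (simp add: field_simps)
  with a(1) have "\<epsilon> * pmf (map_pmf fst p) x * a \<le> a * measure (measure_pmf p) (Pair x ` G)"
    by (simp add: mult.commute mult_left_mono)
  then have "ennreal (\<epsilon> * pmf (map_pmf fst p) x * a) \<le> ennreal (a * measure (measure_pmf p) (Pair x ` G))"
    by (rule ennreal_leI)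
  also have "\<dots> = (\<Sum>\<^sub>\<infinity> y\<in>G. ennreal a * ennreal (pmf p (x, y)))"
    using a(1) by (simp add: ennreal_mult' ennreal_measure_pmf_fibre infsum_cmult_left_ennreal)
  also have "\<dots> \<le> (\<Sum>\<^sub>\<infinity> y. ennreal (pmf p (x, y) * self_info p x y))"
  proof (rule infsum_mono_ennreal)
    fix y assume "y \<in> G"
    then have "a * pmf p (x, y) \<le> pmf p (x, y) * self_info p x y"
      unfolding G_def by (simp add: mult.commute mult_right_mono)
    with a(1) show "ennreal a * ennreal (pmf p (x, y)) \<le> ennreal (pmf p (x, y) * self_info p x y)"
      by (simp add: ennreal_mult'[symmetric] ennreal_leI)
  qed auto
  finally show ?thesis .
qed

lemma hbar_markov:
  assumes pos: "pmf (map_pmf fst p) x > 0" and \<epsilon>: "0 < \<epsilon>" "\<epsilon> < 1"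
  shows "ennreal (\<epsilon> * pmf (map_pmf fst p) x * hbar \<epsilon> p x)
    \<le> (\<Sum>\<^sub>\<infinity> y. ennreal (pmf p (x, y) * self_info p x y))"
    (is "ennreal (?m * ?h) \<le> ?R")
proof (rule ccontr)
  assume "\<not> ?thesis"
  then have lt: "?R < ennreal (?m * ?h)" by simp
  then obtain r where r: "?R = ennreal r" "r \<ge> 0"
    by (cases ?R rule: ennreal_cases) auto
  have mpos: "?m > 0" using pos \<epsilon> by simp
  from lt r have "r < ?m * ?h" by (simp add: ennreal_less_iff)
  with mpos have "r / ?m < ?h" by (simp add: divide_less_eq mult.commute)
  then obtain a where a: "r / ?m < a" "a < ?h" using dense by blast
  have "0 \<le> r / ?m" using r(2) mpos by simp
  with a(1) have "0 \<le> a" by linarith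
  from a(1) mpos have "r < ?m * a" by (simp add: divide_less_eq mult.commute)
  with r(2) have "?R < ennreal (?m * a)" by (simp add: r(1) ennreal_lessI)
  with hbar_markov_level[OF pos \<epsilon>(2) \<open>0 \<le> a\<close> a(2)] show False by simp
qed

section \<open>Mixtures\<close>

lemma measure_pmf_mixture:
  assumes "\<And>z. pmf p z = a1 * pmf p1 z + a2 * pmf p2 z"
  shows "measure (measure_pmf p) A = a1 * measure (measure_pmf p1) A + a2 * measure (measure_pmf p2) A"
proof -
  have "measure (measure_pmf p) A = (\<Sum>\<^sub>\<infinity> w\<in>A. a1 * pmf p1 w + a2 * pmf p2 w)"
    by (simp add: measure_pmf_eq_infsum assms)
  also have "\<dots> = (\<Sum>\<^sub>\<infinity> w\<in>A. a1 * pmf p1 w) + (\<Sum>\<^sub>\<infinity> w\<in>A. a2 * pmf p2 w)"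
    by (intro infsum_add summable_on_cmult_right summable_on_pmf)
  also have "\<dots> = a1 * measure (measure_pmf p1) A + a2 * measure (measure_pmf p2) A"
    by (simp add: infsum_cmult_right' measure_pmf_eq_infsum)
  finally show ?thesis .
qed

lemma pmf_map_mixture:
  assumes "\<And>z. pmf p z = a1 * pmf p1 z + a2 * pmf p2 z"
  shows "pmf (map_pmf f p) x = a1 * pmf (map_pmf f p1) x + a2 * pmf (map_pmf f p2) x"
  unfolding pmf_map by (rule measure_pmf_mixture[OF assms])

text \<open>Where \<open>P\<^sub>2\<close> does not dominate \<open>K\<close> times \<open>P\<^sub>1\<close>, mixing multiplies the numerator of
  \<open>P\<^sub>X\<^sub>|\<^sub>Y(x | y)\<close> by at most \<open>(1 + K) \<alpha>\<^sub>1\<close> and its denominator by at least \<open>\<alpha>\<^sub>1\<close>.\<close>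

lemma self_info_mixture_ge:
  assumes mix: "\<And>z. pmf p z = a1 * pmf p1 z + a2 * pmf p2 z"
    and a: "a1 > 0" "a2 > 0" and K: "K > 0"
    and small: "a2 * pmf p2 (x, y) < K * a1 * pmf p1 (x, y)"
  shows "self_info p x y \<ge> self_info p1 x y - log 2 (1 + K)"
proof -
  define q1 q2 where "q1 = pmf p1 (x, y)" and "q2 = pmf p2 (x, y)"
  define r1 r2 where "r1 = pmf (map_pmf snd p1) y" and "r2 = pmf (map_pmf snd p2) y"
  have q2: "q2 \<ge> 0" and r2: "r2 \<ge> 0" unfolding q2_def r2_def by simp_all
  have q1: "q1 > 0" using small a K q2 unfolding q1_def q2_def
    by (smt (verit) mult_nonneg_nonneg mult_pos_pos pmf_nonneg zero_less_mult_iff)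
  have r1: "r1 > 0" using q1 pmf_le_pmf_snd[of p1 x y] unfolding q1_def r1_def by linarith
  have c1: "condXY p1 x y = q1 / r1" unfolding condXY_def q1_def r1_def ..
  have cp: "condXY p x y = (a1 * q1 + a2 * q2) / (a1 * r1 + a2 * r2)"
    unfolding condXY_def q1_def q2_def r1_def r2_def by (simp add: mix pmf_map_mixture[OF mix])
  have num: "0 < a1 * q1 + a2 * q2" "a1 * q1 + a2 * q2 \<le> (1 + K) * (a1 * q1)"
    using small a q1 q2 unfolding q1_def q2_def by (simp_all add: algebra_simps add_pos_nonneg)
  have "condXY p x y \<le> (1 + K) * (a1 * q1) / (a1 * r1)"
    unfolding cp using num a r1 r2 K by (intro frac_le) auto
  also have "\<dots> = (1 + K) * condXY p1 x y" unfolding c1 using a r1 by (simp add: field_simps)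
  finally have le: "condXY p x y \<le> (1 + K) * condXY p1 x y" .
  have pos: "condXY p x y > 0" "condXY p1 x y > 0"
    unfolding cp c1 using num a q1 r1 r2 by (simp_all add: add_pos_nonneg)
  have "self_info p1 x y - log 2 (1 + K) = log 2 (1 / ((1 + K) * condXY p1 x y))"
    unfolding self_info_def using K pos by (simp add: log_divide log_mult)
  also have "\<dots> \<le> self_info p x y" unfolding self_info_def using le pos K by (simp add: frac_le)
  finally show ?thesis .
qed

lemma measure_fibre_dominated:
  assumes "c \<ge> 0" "\<And>y. y \<in> B \<Longrightarrow> pmf p1 (x, y) \<le> c * pmf p2 (x, y)"
  shows "measure (measure_pmf p1) (Pair x ` B) \<le> c * pmf (map_pmf fst p2) x"
proof -
  have "measure (measure_pmf p1) (Pair x ` B) \<le> (\<Sum>\<^sub>\<infinity> y\<in>B. c * pmf p2 (x, y))"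
    unfolding measure_pmf_fibre using assms(2)
    by (intro infsum_mono summable_on_cmult_right summable_on_pmf_fibre)
  also have "\<dots> = c * measure (measure_pmf p2) (Pair x ` B)"
    unfolding measure_pmf_fibre by (rule infsum_cmult_right')
  also have "\<dots> \<le> c * pmf (map_pmf fst p2) x"
    using assms(1) by (intro mult_left_mono measure_fibre_le_pmf_fst)
  finally show ?thesis .
qed

lemma measure_self_info_mixture_ge:
  assumes mix: "\<And>z. pmf p z = a1 * pmf p1 z + a2 * pmf p2 z"
    and a: "a1 > 0" "a2 > 0" and K: "K > 0"
  shows "a1 * measure (measure_pmf p1) (Pair x ` {y. self_info p1 x y > b + log 2 (1 + K)})
      - a2 * pmf (map_pmf fst p2) x / K
    \<le> measure (measure_pmf p) (Pair x ` {y. self_info p x y > b})"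
proof -
  define G where "G = {y. self_info p1 x y > b + log 2 (1 + K)}"
  define E where "E = {y. self_info p x y > b}"
  define B where "B = {y. K * a1 * pmf p1 (x, y) \<le> a2 * pmf p2 (x, y)}"
  have "G \<subseteq> E \<union> B"
  proof
    fix y assume "y \<in> G"
    then show "y \<in> E \<union> B"
      using self_info_mixture_ge[OF mix a K, of x y] unfolding G_def E_def B_def by force
  qed
  then have "measure (measure_pmf p1) (Pair x ` G) \<le> measure (measure_pmf p1) (Pair x ` E \<union> Pair x ` B)"
    by (intro measure_pmf.finite_measure_mono) auto
  also have "\<dots> \<le> measure (measure_pmf p1) (Pair x ` E) + measure (measure_pmf p1) (Pair x ` B)"
    by (rule measure_subadditive) (auto simp: measure_pmf.emeasure_finite)
  also have "measure (measure_pmf p1) (Pair x ` B) \<le> a2 / (K * a1) * pmf (map_pmf fst p2) x"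
    using a K by (intro measure_fibre_dominated) (auto simp: B_def field_simps)
  finally have "a1 * measure (measure_pmf p1) (Pair x ` G)
      \<le> a1 * measure (measure_pmf p1) (Pair x ` E) + a2 * pmf (map_pmf fst p2) x / K"
    using a K by (simp add: field_simps)
  also have "a1 * measure (measure_pmf p1) (Pair x ` E) \<le> measure (measure_pmf p) (Pair x ` E)"
    unfolding measure_pmf_mixture[OF mix, of "Pair x ` E"] using a by simp
  finally show ?thesis unfolding G_def E_def by simp
qed

lemma hbar_mixture_ge:
  assumes mix: "\<And>z. pmf p z = a1 * pmf p1 z + a2 * pmf p2 z"
    and a: "a1 > 0" "a2 > 0" and \<tau>: "\<tau> > 0" and \<epsilon>: "0 < \<epsilon>" "\<epsilon> < 1"
    and pos: "pmf (map_pmf fst p) x > 0"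
    and large: "a1 * pmf (map_pmf fst p1) x \<ge> \<tau> * pmf (map_pmf fst p) x"
  shows "hbar (\<tau> * \<epsilon> / 2) p x \<ge> hbar \<epsilon> p1 x - log 2 (1 + 2 / (\<tau> * \<epsilon>))"
proof -
  define K where "K = 2 / (\<tau> * \<epsilon>)"
  define m m1 m2 where "m = pmf (map_pmf fst p) x" and "m1 = pmf (map_pmf fst p1) x"
    and "m2 = pmf (map_pmf fst p2) x"
  have K0: "K > 0" unfolding K_def using \<tau> \<epsilon> by simp
  have mm: "m = a1 * m1 + a2 * m2" unfolding m_def m1_def m2_def by (rule pmf_map_mixture[OF mix])
  have m1: "m1 > 0" using large pos \<tau> a unfolding m_def m1_def
    by (metis mult_pos_pos order_less_le_trans zero_less_mult_pos)
  have m2: "a2 * m2 / K \<le> \<tau> * \<epsilon> / 2 * m"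
  proof -
    have "a2 * m2 \<le> m" using mm a(1) m1 by (simp add: less_imp_le)
    then have "a2 * m2 / K \<le> m / K" using K0 by (simp add: divide_right_mono)
    also have "m / K = \<tau> * \<epsilon> / 2 * m" unfolding K_def by simp
    finally show ?thesis .
  qed
  show ?thesis unfolding K_def[symmetric]
  proof (rule hbar_geI[OF pos])
    show "\<tau> * \<epsilon> / 2 > 0" using \<tau> \<epsilon> by simp
    fix b assume "b < hbar \<epsilon> p1 x - log 2 (1 + K)"
    then have "\<epsilon> * m1 < measure (measure_pmf p1) (Pair x ` {y. self_info p1 x y > b + log 2 (1 + K)})"
      using cond_measure_gt_if_less_hbar[of p1 x \<epsilon> "b + log 2 (1 + K)"] m1 \<epsilon>
      unfolding m1_def cond_measure_def by (simp add: field_simps)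
    with a(1) have "a1 * \<epsilon> * m1 < a1 * measure (measure_pmf p1) (Pair x ` {y. self_info p1 x y > b + log 2 (1 + K)})"
      by (simp add: mult.assoc)
    then have "a1 * \<epsilon> * m1 - a2 * m2 / K < measure (measure_pmf p) (Pair x ` {y. self_info p x y > b})"
      using measure_self_info_mixture_ge[OF mix a K0, of x b, folded m2_def] by linarith
    moreover have "\<tau> * \<epsilon> * m \<le> a1 * \<epsilon> * m1"
      using large \<epsilon> unfolding m_def m1_def by (simp add: mult.commute mult.left_commute)
    moreover have "\<tau> * \<epsilon> / 2 * m = \<tau> * \<epsilon> * m / 2" by simp
    ultimately have "\<tau> * \<epsilon> / 2 * m < measure (measure_pmf p) (Pair x ` {y. self_info p x y > b})"
      using m2 by linarith
    then show "cond_measure p x {y. self_info p x y > b} > \<tau> * \<epsilon> / 2"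
      using pos unfolding cond_measure_def m_def by (simp add: field_simps)
  qed
qed

lemma log_one_plus_nonneg: "x \<ge> 0 \<Longrightarrow> log 2 (1 + x) \<ge> 0"
  by (subst zero_le_log_cancel_iff) auto

lemma mixture_component_le:
  fixes p p1 p2 :: "('a \<times> 'b) pmf" and x :: 'a
  assumes mix: "\<And>z. pmf p z = a1 * pmf p1 z + a2 * pmf p2 z"
    and a: "a1 > 0" "a2 > 0" and \<tau>: "0 < \<tau>" "\<tau> \<le> 1" and \<epsilon>: "0 < \<epsilon>" "\<epsilon> < 1"
  defines "m \<equiv> pmf (map_pmf fst p) x" and "m1 \<equiv> pmf (map_pmf fst p1) x"
  shows "a1 * (m1 * hbar \<epsilon> p1 x)
    \<le> a1 * m1 * (hbar (\<tau> * \<epsilon> / 2) p x + log 2 (1 + 2 / (\<tau> * \<epsilon>)))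
       + (if a1 * m1 < \<tau> * m then a1 * (m1 * hbar \<epsilon> p1 x) else 0)"
proof (cases "m1 > 0")
  case m1: True
  have "m = a1 * m1 + a2 * pmf (map_pmf fst p2) x"
    unfolding m_def m1_def by (rule pmf_map_mixture[OF mix])
  with a m1 have pos: "m > 0" by (simp add: add_pos_nonneg)
  have c: "log 2 (1 + 2 / (\<tau> * \<epsilon>)) \<ge> 0" using \<tau> \<epsilon> by (intro log_one_plus_nonneg) simp
  have "\<tau> * \<epsilon> \<le> 1" using \<tau> \<epsilon> by (simp add: mult_le_one)
  then have "\<tau> * \<epsilon> / 2 < 1" by simp
  then have h: "hbar (\<tau> * \<epsilon> / 2) p x \<ge> 0" using hbar_nonneg[of p x] pos \<tau> \<epsilon> unfolding m_def by simp
  show ?thesis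
  proof (cases "a1 * m1 < \<tau> * m")
    case False
    then have "hbar \<epsilon> p1 x \<le> hbar (\<tau> * \<epsilon> / 2) p x + log 2 (1 + 2 / (\<tau> * \<epsilon>))"
      using hbar_mixture_ge[OF mix a \<tau>(1) \<epsilon>, of x] pos unfolding m_def m1_def by simp
    with False a m1 show ?thesis by (simp add: mult_left_mono)
  qed (use a m1 h c in simp)
next
  case False
  then have "m1 = 0" unfolding m1_def using pmf_nonneg[of "map_pmf fst p1" x] by linarith
  then show ?thesis by simp
qed

lemma mixture_pointwise_le:
  fixes p p1 p2 :: "('a \<times> 'b) pmf" and x :: 'a
  assumes mix: "\<And>z. pmf p z = a1 * pmf p1 z + a2 * pmf p2 z"
    and a: "a1 > 0" "a2 > 0" and \<tau>: "0 < \<tau>" "\<tau> \<le> 1" and \<epsilon>: "0 < \<epsilon>" "\<epsilon> < 1"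
  defines "m \<equiv> pmf (map_pmf fst p) x" and "m1 \<equiv> pmf (map_pmf fst p1) x"
    and "m2 \<equiv> pmf (map_pmf fst p2) x"
  shows "a1 * (m1 * hbar \<epsilon> p1 x) + a2 * (m2 * hbar \<epsilon> p2 x)
    \<le> m * hbar (\<tau> * \<epsilon> / 2) p x + m * log 2 (1 + 2 / (\<tau> * \<epsilon>))
       + (if a1 * m1 < \<tau> * m then a1 * (m1 * hbar \<epsilon> p1 x) else 0)
       + (if a2 * m2 < \<tau> * m then a2 * (m2 * hbar \<epsilon> p2 x) else 0)"
proof -
  let ?h = "hbar (\<tau> * \<epsilon> / 2) p x" and ?c = "log 2 (1 + 2 / (\<tau> * \<epsilon>))"
  have mix': "\<And>z. pmf p z = a2 * pmf p2 z + a1 * pmf p1 z" using mix by (simp add: add.commute)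
  have "m = a1 * m1 + a2 * m2" unfolding m_def m1_def m2_def by (rule pmf_map_mixture[OF mix])
  then have "m * ?h + m * ?c = a1 * m1 * (?h + ?c) + a2 * m2 * (?h + ?c)" by (simp add: algebra_simps)
  with mixture_component_le[OF mix a \<tau> \<epsilon>, of x] mixture_component_le[OF mix' a(2,1) \<tau> \<epsilon>, of x]
  show ?thesis unfolding m_def m1_def m2_def by linarith
qed

lemma Hs_eps_mixture_le:
  fixes p p1 p2 :: "('a \<times> 'b) pmf"
  assumes mix: "\<And>z. pmf p z = a1 * pmf p1 z + a2 * pmf p2 z"
    and a: "a1 > 0" "a2 > 0" and \<tau>: "0 < \<tau>" "\<tau> \<le> 1" and \<epsilon>: "0 < \<epsilon>" "\<epsilon> < 1"
  shows "ennreal a1 * Hs_eps \<epsilon> p1 + ennreal a2 * Hs_eps \<epsilon> p2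
    \<le> Hs_eps (\<tau> * \<epsilon> / 2) p + ennreal (log 2 (1 + 2 / (\<tau> * \<epsilon>)))
       + ennreal a1 * (\<Sum>\<^sub>\<infinity> x\<in>{x. a1 * pmf (map_pmf fst p1) x < \<tau> * pmf (map_pmf fst p) x}.
            ennreal (pmf (map_pmf fst p1) x * hbar \<epsilon> p1 x))
       + ennreal a2 * (\<Sum>\<^sub>\<infinity> x\<in>{x. a2 * pmf (map_pmf fst p2) x < \<tau> * pmf (map_pmf fst p) x}.
            ennreal (pmf (map_pmf fst p2) x * hbar \<epsilon> p2 x))"
proof -
  define c where "c = log 2 (1 + 2 / (\<tau> * \<epsilon>))"
  define m m1 m2 where "m x = pmf (map_pmf fst p) x" and "m1 x = pmf (map_pmf fst p1) x"
    and "m2 x = pmf (map_pmf fst p2) x" for x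
  define L1 L2 where "L1 x = a1 * (m1 x * hbar \<epsilon> p1 x)" and "L2 x = a2 * (m2 x * hbar \<epsilon> p2 x)" for x
  define S1 S2 where "S1 = {x. a1 * m1 x < \<tau> * m x}" and "S2 = {x. a2 * m2 x < \<tau> * m x}"
  have L: "L1 x \<ge> 0" "L2 x \<ge> 0" for x
    unfolding L1_def L2_def m1_def m2_def using a
    by (simp_all add: mult_nonneg_nonneg mult_hbar_nonneg[OF \<epsilon>])
  have "ennreal (L1 x) + ennreal (L2 x) \<le> ennreal (m x * hbar (\<tau> * \<epsilon> / 2) p x) + ennreal (m x * c)
      + (if x \<in> S1 then ennreal (L1 x) else 0) + (if x \<in> S2 then ennreal (L2 x) else 0)" for x
  proof -
    let ?I1 = "if x \<in> S1 then L1 x else 0" and ?I2 = "if x \<in> S2 then L2 x else 0"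
    have "ennreal (L1 x) + ennreal (L2 x) = ennreal (L1 x + L2 x)" using L by (simp add: ennreal_plus)
    also have "\<dots> \<le> ennreal (m x * hbar (\<tau> * \<epsilon> / 2) p x + m x * c + ?I1 + ?I2)"
      using mixture_pointwise_le[OF mix a \<tau> \<epsilon>, of x]
      unfolding L1_def L2_def S1_def S2_def m_def m1_def m2_def c_def by (intro ennreal_leI) simp
    also have "\<dots> \<le> ennreal (m x * hbar (\<tau> * \<epsilon> / 2) p x) + ennreal (m x * c) + ennreal ?I1 + ennreal ?I2"
      by (meson ennreal_plus_le add_right_mono order_trans)
    finally show ?thesis by (cases "x \<in> S1"; cases "x \<in> S2") simp_all
  qed
  then have "(\<Sum>\<^sub>\<infinity> x. ennreal (L1 x) + ennreal (L2 x))
      \<le> (\<Sum>\<^sub>\<infinity> x. ennreal (m x * hbar (\<tau> * \<epsilon> / 2) p x) + ennreal (m x * c)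
      + (if x \<in> S1 then ennreal (L1 x) else 0) + (if x \<in> S2 then ennreal (L2 x) else 0))"
    by (intro infsum_mono_ennreal) auto
  also have "\<dots> = Hs_eps (\<tau> * \<epsilon> / 2) p + (\<Sum>\<^sub>\<infinity> x. ennreal (m x * c))
      + (\<Sum>\<^sub>\<infinity> x\<in>S1. ennreal (L1 x)) + (\<Sum>\<^sub>\<infinity> x\<in>S2. ennreal (L2 x))"
    unfolding infsum_add_ennreal infsum_if_ennreal Hs_eps_def m_def ..
  also have "(\<Sum>\<^sub>\<infinity> x. ennreal (m x * c)) = ennreal c"
    unfolding m_def c_def using \<tau> \<epsilon> by (intro infsum_pmf_mult_ennreal log_one_plus_nonneg) simp
  also have "(\<Sum>\<^sub>\<infinity> x. ennreal (L1 x) + ennreal (L2 x)) = ennreal a1 * Hs_eps \<epsilon> p1 + ennreal a2 * Hs_eps \<epsilon> p2"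
    unfolding infsum_add_ennreal Hs_eps_def L1_def L2_def m1_def m2_def infsum_cmult_left_ennreal[symmetric]
    using a by (simp add: ennreal_mult')
  also have "(\<Sum>\<^sub>\<infinity> x\<in>S1. ennreal (L1 x)) = ennreal a1 * (\<Sum>\<^sub>\<infinity> x\<in>S1. ennreal (m1 x * hbar \<epsilon> p1 x))"
    unfolding L1_def infsum_cmult_left_ennreal[symmetric] using a by (simp add: ennreal_mult')
  also have "(\<Sum>\<^sub>\<infinity> x\<in>S2. ennreal (L2 x)) = ennreal a2 * (\<Sum>\<^sub>\<infinity> x\<in>S2. ennreal (m2 x * hbar \<epsilon> p2 x))"
    unfolding L2_def infsum_cmult_left_ennreal[symmetric] using a by (simp add: ennreal_mult')
  finally show ?thesis unfolding S1_def S2_def m_def m1_def m2_def c_def .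
qed

section \<open>Uniform integrability and the limit\<close>

definition Z_tail :: "(nat \<Rightarrow> ('a \<times> 'b) pmf) \<Rightarrow> real \<Rightarrow> nat \<Rightarrow> ennreal" where
  "Z_tail P u n = (\<Sum>\<^sub>\<infinity> z\<in>{z. u \<le> \<bar>z\<bar>}. ennreal (pmf (Zdist P n) z * \<bar>z\<bar>))"

lemma infsum_hbar_le_self_info:
  assumes \<epsilon>: "0 < \<epsilon>" "\<epsilon> < 1"
  shows "ennreal \<epsilon> * (\<Sum>\<^sub>\<infinity> x\<in>S. ennreal (pmf (map_pmf fst p) x * hbar \<epsilon> p x))
    \<le> (\<Sum>\<^sub>\<infinity> x\<in>S. \<Sum>\<^sub>\<infinity> y. ennreal (pmf p (x, y) * self_info p x y))"
proof -
  have "ennreal \<epsilon> * (\<Sum>\<^sub>\<infinity> x\<in>S. ennreal (pmf (map_pmf fst p) x * hbar \<epsilon> p x))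
      = (\<Sum>\<^sub>\<infinity> x\<in>S. ennreal (\<epsilon> * pmf (map_pmf fst p) x * hbar \<epsilon> p x))"
    using \<epsilon> by (simp add: infsum_cmult_left_ennreal[symmetric] ennreal_mult' mult.assoc)
  also have "\<dots> \<le> (\<Sum>\<^sub>\<infinity> x\<in>S. \<Sum>\<^sub>\<infinity> y. ennreal (pmf p (x, y) * self_info p x y))"
  proof (rule infsum_mono_ennreal)
    fix x
    show "ennreal (\<epsilon> * pmf (map_pmf fst p) x * hbar \<epsilon> p x)
        \<le> (\<Sum>\<^sub>\<infinity> y. ennreal (pmf p (x, y) * self_info p x y))"
    proof (cases "pmf (map_pmf fst p) x > 0")
      case False
      then have "pmf (map_pmf fst p) x = 0" using pmf_nonneg[of "map_pmf fst p" x] by linarith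
      then show ?thesis by simp
    qed (rule hbar_markov[OF _ \<epsilon>])
  qed simp
  finally show ?thesis .
qed

lemma ennreal_mult_le_truncation:
  fixes q t c u :: real
  assumes q: "q \<ge> 0" and c: "c > 0" and u: "u \<ge> 0"
  shows "ennreal (q * t)
    \<le> ennreal (c * u) * ennreal q + ennreal c * (if u \<le> \<bar>t / c\<bar> then ennreal (q * \<bar>t / c\<bar>) else 0)"
proof (cases "u \<le> \<bar>t / c\<bar>")
  case True
  have "t \<le> c * \<bar>t / c\<bar>" using c by simp
  then have "q * t \<le> q * (c * \<bar>t / c\<bar>)" using q by (rule mult_left_mono)
  then have "q * t \<le> c * (q * \<bar>t / c\<bar>)" by (metis mult.left_commute)
  then have "ennreal (q * t) \<le> ennreal c * ennreal (q * \<bar>t / c\<bar>)"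
    using c q by (subst ennreal_mult[symmetric]) (auto intro: ennreal_leI)
  with True show ?thesis by (simp only: if_True) (rule add_increasing[OF zero_le])
next
  case False
  then have "\<bar>t\<bar> / c < u" using c by simp
  then have "t \<le> c * u" using c by (simp add: divide_less_eq mult.commute)
  then have "q * t \<le> c * u * q" using q by (simp add: mult_left_mono mult.commute)
  then have "ennreal (q * t) \<le> ennreal (c * u) * ennreal q"
    using c u q by (subst ennreal_mult[symmetric]) (auto intro: ennreal_leI)
  with False show ?thesis by (simp only: if_False mult_zero_right add_0_right)
qed

text \<open>Markov's inequality on each fibre, with the self-information split at level \<open>n u\<close>:
  below it contributes at most \<open>n u\<close> per unit mass, above it is controlled by the tail of \<open>Z\<^sub>n\<close>.\<close>

lemma infsum_hbar_le_Z_tail: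
  fixes P :: "nat \<Rightarrow> ('a \<times> 'b) pmf"
  assumes n: "n \<ge> 1" and \<epsilon>: "0 < \<epsilon>" "\<epsilon> < 1" and u: "u \<ge> 0"
  shows "ennreal \<epsilon> * (\<Sum>\<^sub>\<infinity> x\<in>S. ennreal (pmf (map_pmf fst (P n)) x * hbar \<epsilon> (P n) x))
    \<le> ennreal (real n * u) * (\<Sum>\<^sub>\<infinity> x\<in>S. ennreal (pmf (map_pmf fst (P n)) x))
       + ennreal (real n) * Z_tail P u n"
proof -
  define q where "q = P n"
  define Z where "Z = (\<lambda>(x, y). 1 / real n * log 2 (1 / condXY q x y))"
  define T where "T x y = (if Z (x, y) \<in> {z. u \<le> \<bar>z\<bar>} then ennreal (pmf q (x, y) * \<bar>Z (x, y)\<bar>) else 0)"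
    for x y
  have npos: "real n > 0" using n by simp
  have "ennreal (pmf q (x, y) * self_info q x y)
      \<le> ennreal (real n * u) * ennreal (pmf q (x, y)) + ennreal (real n) * T x y" for x y
  proof -
    have "Z (x, y) = self_info q x y / real n" unfolding Z_def self_info_def by simp
    then show ?thesis unfolding T_def mem_Collect_eq
      by (rule ssubst) (rule ennreal_mult_le_truncation[OF pmf_nonneg npos u])
  qed
  then have "ennreal \<epsilon> * (\<Sum>\<^sub>\<infinity> x\<in>S. ennreal (pmf (map_pmf fst q) x * hbar \<epsilon> q x))
      \<le> (\<Sum>\<^sub>\<infinity> x\<in>S. \<Sum>\<^sub>\<infinity> y. ennreal (real n * u) * ennreal (pmf q (x, y)) + ennreal (real n) * T x y)"
    by (intro order_trans[OF infsum_hbar_le_self_info[OF \<epsilon>]] infsum_mono_ennreal) auto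
  also have "\<dots> = ennreal (real n * u) * (\<Sum>\<^sub>\<infinity> x\<in>S. ennreal (pmf (map_pmf fst q) x))
      + ennreal (real n) * (\<Sum>\<^sub>\<infinity> x\<in>S. \<Sum>\<^sub>\<infinity> y. T x y)"
    unfolding infsum_add_ennreal infsum_cmult_left_ennreal infsum_pmf_fibre ..
  also have "(\<Sum>\<^sub>\<infinity> x\<in>S. \<Sum>\<^sub>\<infinity> y. T x y) \<le> Z_tail P u n"
  proof -
    have Zdist: "Zdist P n = map_pmf Z q" unfolding Zdist_def Z_def q_def ..
    show ?thesis unfolding T_def Z_tail_def Zdist by (rule infsum_fibres_le_pushforward)
  qed
  finally show ?thesis unfolding q_def by (simp add: mult_left_mono add_left_mono)
qed

lemma infsum_small_component_le:
  assumes "a > 0" "\<tau> \<ge> 0"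
  shows "(\<Sum>\<^sub>\<infinity> x\<in>{x. a * pmf (map_pmf fst q) x < \<tau> * pmf (map_pmf fst p) x}.
      ennreal (pmf (map_pmf fst q) x)) \<le> ennreal (\<tau> / a)"
proof -
  have "(\<Sum>\<^sub>\<infinity> x\<in>{x. a * pmf (map_pmf fst q) x < \<tau> * pmf (map_pmf fst p) x}. ennreal (pmf (map_pmf fst q) x))
      \<le> (\<Sum>\<^sub>\<infinity> x. ennreal (\<tau> / a) * ennreal (pmf (map_pmf fst p) x))"
  proof (rule infsum_mono_ennreal)
    fix x assume "x \<in> {x. a * pmf (map_pmf fst q) x < \<tau> * pmf (map_pmf fst p) x}"
    with assms have "pmf (map_pmf fst q) x \<le> \<tau> / a * pmf (map_pmf fst p) x" by (simp add: field_simps)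
    with assms show "ennreal (pmf (map_pmf fst q) x) \<le> ennreal (\<tau> / a) * ennreal (pmf (map_pmf fst p) x)"
      by (simp add: ennreal_mult[symmetric] ennreal_leI)
  qed simp
  also have "\<dots> = ennreal (\<tau> / a)" by (simp add: infsum_cmult_left_ennreal infsum_pmf_ennreal)
  finally show ?thesis .
qed

lemma small_component_le_Z_tail:
  fixes Q :: "nat \<Rightarrow> ('a \<times> 'b) pmf"
  assumes n: "n \<ge> 1" and \<epsilon>: "0 < \<epsilon>" "\<epsilon> < 1" and u: "u \<ge> 0" and a: "a > 0" and \<tau>: "\<tau> \<ge> 0"
  shows "ennreal (a / real n) * (\<Sum>\<^sub>\<infinity> x\<in>{x. a * pmf (map_pmf fst (Q n)) x < \<tau> * pmf (map_pmf fst p) x}.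
      ennreal (pmf (map_pmf fst (Q n)) x * hbar \<epsilon> (Q n) x))
    \<le> ennreal (u * \<tau> / \<epsilon>) + ennreal (a / \<epsilon>) * Z_tail Q u n"
proof -
  define S where "S = {x. a * pmf (map_pmf fst (Q n)) x < \<tau> * pmf (map_pmf fst p) x}"
  define E where "E = (\<Sum>\<^sub>\<infinity> x\<in>S. ennreal (pmf (map_pmf fst (Q n)) x * hbar \<epsilon> (Q n) x))"
  define k where "k = a / (real n * \<epsilon>)"
  have npos: "real n > 0" using n by simp
  have k: "k \<ge> 0" "k * (real n * u * (\<tau> / a)) = u * \<tau> / \<epsilon>" "k * real n = a / \<epsilon>"
    unfolding k_def using a npos \<epsilon> by (simp_all add: field_simps)
  have "ennreal \<epsilon> * E \<le> ennreal (real n * u) * (\<Sum>\<^sub>\<infinity> x\<in>S. ennreal (pmf (map_pmf fst (Q n)) x))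
      + ennreal (real n) * Z_tail Q u n"
    unfolding E_def by (rule infsum_hbar_le_Z_tail[OF n \<epsilon> u])
  also have "\<dots> \<le> ennreal (real n * u) * ennreal (\<tau> / a) + ennreal (real n) * Z_tail Q u n"
    unfolding S_def using infsum_small_component_le[OF a \<tau>] by (intro add_right_mono mult_left_mono) auto
  finally have "ennreal k * (ennreal \<epsilon> * E)
      \<le> ennreal k * (ennreal (real n * u) * ennreal (\<tau> / a) + ennreal (real n) * Z_tail Q u n)"
    by (rule mult_left_mono) simp
  also have "ennreal k * (ennreal \<epsilon> * E) = ennreal (a / real n) * E"
    using k(1) \<epsilon> npos by (simp add: k_def ennreal_mult[symmetric] mult.assoc[symmetric])
  also have "ennreal k * (ennreal (real n * u) * ennreal (\<tau> / a) + ennreal (real n) * Z_tail Q u n)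
      = ennreal (u * \<tau> / \<epsilon>) + ennreal (a / \<epsilon>) * Z_tail Q u n"
    using k npos u a \<tau> by (simp add: distrib_left ennreal_mult[symmetric] mult.assoc[symmetric])
  finally show ?thesis unfolding E_def S_def .
qed

lemma Hs_eps_mixture_le_Z_tail:
  fixes P P1 P2 :: "nat \<Rightarrow> ('a \<times> 'b) pmf"
  assumes mix: "\<And>z. pmf (P n) z = a1 * pmf (P1 n) z + a2 * pmf (P2 n) z"
    and a: "a1 > 0" "a2 > 0" and \<tau>: "0 < \<tau>" "\<tau> \<le> 1" and \<epsilon>: "0 < \<epsilon>" "\<epsilon> < 1"
    and u: "u \<ge> 0" and n: "n \<ge> 1"
  shows "ennreal (a1 / real n) * Hs_eps \<epsilon> (P1 n) + ennreal (a2 / real n) * Hs_eps \<epsilon> (P2 n)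
    \<le> ennreal (1 / real n) * Hs_eps (\<tau> * \<epsilon> / 2) (P n) + ennreal (log 2 (1 + 2 / (\<tau> * \<epsilon>)) / real n)
       + ennreal (2 * u * \<tau> / \<epsilon>) + ennreal (a1 / \<epsilon>) * Z_tail P1 u n + ennreal (a2 / \<epsilon>) * Z_tail P2 u n"
proof -
  define c where "c = log 2 (1 + 2 / (\<tau> * \<epsilon>))"
  define i where "i = ennreal (1 / real n)"
  define E1 where "E1 = (\<Sum>\<^sub>\<infinity> x\<in>{x. a1 * pmf (map_pmf fst (P1 n)) x < \<tau> * pmf (map_pmf fst (P n)) x}.
      ennreal (pmf (map_pmf fst (P1 n)) x * hbar \<epsilon> (P1 n) x))"
  define E2 where "E2 = (\<Sum>\<^sub>\<infinity> x\<in>{x. a2 * pmf (map_pmf fst (P2 n)) x < \<tau> * pmf (map_pmf fst (P n)) x}.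
      ennreal (pmf (map_pmf fst (P2 n)) x * hbar \<epsilon> (P2 n) x))"
  have npos: "real n > 0" using n by simp
  have c: "c \<ge> 0" unfolding c_def using \<tau> \<epsilon> by (intro log_one_plus_nonneg) simp
  have ia: "ennreal (a1 / real n) = i * ennreal a1" "ennreal (a2 / real n) = i * ennreal a2"
    "i * ennreal c = ennreal (c / real n)"
    unfolding i_def using a npos c by (simp_all add: ennreal_mult[symmetric])
  have "ennreal (a1 / real n) * Hs_eps \<epsilon> (P1 n) + ennreal (a2 / real n) * Hs_eps \<epsilon> (P2 n)
      = i * (ennreal a1 * Hs_eps \<epsilon> (P1 n) + ennreal a2 * Hs_eps \<epsilon> (P2 n))"
    unfolding ia by (simp add: distrib_left mult.assoc)
  also have "\<dots> \<le> i * (Hs_eps (\<tau> * \<epsilon> / 2) (P n) + ennreal c + ennreal a1 * E1 + ennreal a2 * E2)"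
    unfolding c_def E1_def E2_def by (intro mult_left_mono Hs_eps_mixture_le[OF mix a \<tau> \<epsilon>]) simp
  also have "\<dots> = i * Hs_eps (\<tau> * \<epsilon> / 2) (P n) + ennreal (c / real n)
      + ennreal (a1 / real n) * E1 + ennreal (a2 / real n) * E2"
    unfolding ia(1,2) by (simp add: ia(3) distrib_left mult.assoc)
  also have "\<dots> \<le> i * Hs_eps (\<tau> * \<epsilon> / 2) (P n) + ennreal (c / real n)
      + (ennreal (u * \<tau> / \<epsilon>) + ennreal (a1 / \<epsilon>) * Z_tail P1 u n)
      + (ennreal (u * \<tau> / \<epsilon>) + ennreal (a2 / \<epsilon>) * Z_tail P2 u n)"
    unfolding E1_def E2_def using \<tau>
    by (intro add_mono order_refl small_component_le_Z_tail[OF n \<epsilon> u] a) simp_all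
  also have "\<dots> = i * Hs_eps (\<tau> * \<epsilon> / 2) (P n) + ennreal (c / real n)
      + (ennreal (u * \<tau> / \<epsilon>) + ennreal (u * \<tau> / \<epsilon>))
      + ennreal (a1 / \<epsilon>) * Z_tail P1 u n + ennreal (a2 / \<epsilon>) * Z_tail P2 u n"
    by (simp add: ac_simps)
  also have "ennreal (u * \<tau> / \<epsilon>) + ennreal (u * \<tau> / \<epsilon>) = ennreal (2 * u * \<tau> / \<epsilon>)"
    using u \<tau> \<epsilon> by (simp add: ennreal_plus[symmetric])
  finally show ?thesis unfolding i_def c_def .
qed

lemma Lim_at_right_0_antimono:
  fixes f :: "real \<Rightarrow> ennreal"
  assumes antimono: "\<And>a b. 0 < a \<Longrightarrow> a \<le> b \<Longrightarrow> b < 1 \<Longrightarrow> f b \<le> f a"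
  shows "Lim (at_right 0) f = (SUP e\<in>{0<..<1}. f e)"
proof -
  let ?S = "SUP e\<in>{0<..<1}. f e"
  have "(f \<longlongrightarrow> ?S) (at_right 0)"
  proof (rule order_tendstoI)
    fix y assume "y < ?S"
    then obtain e0 where e0: "e0 \<in> {0<..<1}" "y < f e0" by (auto simp: less_SUP_iff)
    have "eventually (\<lambda>e. 0 < e \<and> e < e0) (at_right (0::real))"
      unfolding eventually_at_right_field using e0 by auto
    then show "eventually (\<lambda>e. y < f e) (at_right 0)"
      by (rule eventually_mono) (use e0 antimono[of _ e0] in \<open>auto intro: less_le_trans\<close>)
  next
    fix y assume "?S < y"
    have "eventually (\<lambda>e. 0 < e \<and> e < 1) (at_right (0::real))"
      unfolding eventually_at_right_field by (intro exI[of _ 1]) auto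
    then show "eventually (\<lambda>e. f e < y) (at_right 0)"
      by (rule eventually_mono) (meson \<open>?S < y\<close> SUP_upper greaterThanLessThan_iff le_less_trans)
  qed
  then show ?thesis by (rule tendsto_Lim[OF trivial_limit_at_right_real])
qed

lemma eventually_Z_tail_less:
  assumes "unif_integrable P" "\<eta> > 0"
  shows "eventually (\<lambda>u. \<forall>n\<ge>1. Z_tail P u n < ennreal \<eta>) at_top"
proof -
  have "eventually (\<lambda>u. (SUP n\<in>{1..}. Z_tail P u n) < ennreal \<eta>) at_top"
    using assms by (intro order_tendstoD(2)) (auto simp: unif_integrable_def Z_tail_def)
  then show ?thesis by (rule eventually_mono) (meson SUP_upper atLeast_iff le_less_trans)
qed

lemma ennreal_error_terms_le:
  fixes T1 T2 :: ennreal
  assumes \<epsilon>: "0 < \<epsilon>" and e: "0 < e" and ab: "a < e / 4" "b \<le> e / 4"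
    and a: "0 \<le> a1" "a1 \<le> 1" "0 \<le> a2" "a2 \<le> 1"
    and T: "T1 < ennreal (\<epsilon> * e / 4)" "T2 < ennreal (\<epsilon> * e / 4)"
  shows "ennreal a + ennreal b + ennreal (a1 / \<epsilon>) * T1 + ennreal (a2 / \<epsilon>) * T2 \<le> ennreal e"
proof -
  have tail: "ennreal (a' / \<epsilon>) * T \<le> ennreal (e / 4)"
    if "0 \<le> a'" "a' \<le> 1" "T < ennreal (\<epsilon> * e / 4)" for a' T
  proof -
    have "ennreal (a' / \<epsilon>) * T \<le> ennreal (a' / \<epsilon>) * ennreal (\<epsilon> * e / 4)"
      by (intro mult_left_mono less_imp_le[OF that(3)]) simp
    also have "\<dots> = ennreal (a' / \<epsilon> * (\<epsilon> * e / 4))"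
      using that \<epsilon> e by (intro ennreal_mult[symmetric]) auto
    also have "a' / \<epsilon> * (\<epsilon> * e / 4) = a' * (e / 4)" using \<epsilon> by simp
    also have "ennreal (a' * (e / 4)) \<le> ennreal (e / 4)"
      using that e by (intro ennreal_leI mult_left_le_one_le) auto
    finally show ?thesis .
  qed
  have "ennreal a + ennreal b + ennreal (a1 / \<epsilon>) * T1 + ennreal (a2 / \<epsilon>) * T2
      \<le> ennreal (e / 4) + ennreal (e / 4) + ennreal (e / 4) + ennreal (e / 4)"
    using ab a T by (intro add_mono tail ennreal_leI) auto
  also have "\<dots> = ennreal e" using e by (simp add: ennreal_plus[symmetric])
  finally show ?thesis .
qed

text \<open>The error terms of \<open>Hs_eps_mixture_le_Z_tail\<close> must be made small in this order: first
  the tail level \<open>u\<close> by uniform integrability, then \<open>\<tau>\<close> depending on \<open>u\<close>, and finally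
  \<open>log (1 + 2 / (\<tau> \<epsilon>)) / n\<close> by taking \<open>n\<close> large.\<close>

lemma limsup_mixture_le:
  fixes P P1 P2 :: "nat \<Rightarrow> ('a \<times> 'b) pmf"
  assumes mix: "\<And>n z. pmf (P n) z = a1 * pmf (P1 n) z + a2 * pmf (P2 n) z"
    and a: "a1 > 0" "a2 > 0" "a1 + a2 = 1"
    and ui: "unif_integrable P1" "unif_integrable P2" and \<epsilon>: "0 < \<epsilon>" "\<epsilon> < 1"
  shows "limsup (\<lambda>n. ennreal (a1 / real n) * Hs_eps \<epsilon> (P1 n) + ennreal (a2 / real n) * Hs_eps \<epsilon> (P2 n))
    \<le> (SUP \<delta>\<in>{0<..<1}. limsup (\<lambda>n. ennreal (1 / real n) * Hs_eps \<delta> (P n)))"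
proof (rule ennreal_le_epsilon)
  fix e :: real assume e: "0 < e"
  have "eventually (\<lambda>u. 0 \<le> u \<and> (\<forall>n\<ge>1. Z_tail P1 u n < ennreal (\<epsilon> * e / 4))
      \<and> (\<forall>n\<ge>1. Z_tail P2 u n < ennreal (\<epsilon> * e / 4))) at_top"
    using \<epsilon> e by (intro eventually_conj eventually_ge_at_top eventually_Z_tail_less ui) simp_all
  then obtain u where u: "0 \<le> u" "\<And>n. n \<ge> 1 \<Longrightarrow> Z_tail P1 u n < ennreal (\<epsilon> * e / 4)"
    "\<And>n. n \<ge> 1 \<Longrightarrow> Z_tail P2 u n < ennreal (\<epsilon> * e / 4)"
    unfolding eventually_at_top_linorder by blast
  define \<tau> where "\<tau> = min 1 (\<epsilon> * e / (8 * (u + 1)))"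
  have \<tau>: "0 < \<tau>" "\<tau> \<le> 1" unfolding \<tau>_def using \<epsilon> e u by auto
  have "2 * u * \<tau> \<le> 2 * (u + 1) * (\<epsilon> * e / (8 * (u + 1)))"
    unfolding \<tau>_def using \<tau> u \<epsilon> e by (intro mult_mono) auto
  also have "\<dots> = \<epsilon> * e / 4" using u by (simp add: field_simps)
  finally have u\<tau>: "2 * u * \<tau> / \<epsilon> \<le> e / 4" using \<epsilon> by (simp add: divide_le_eq mult.commute)
  define \<delta> where "\<delta> = \<tau> * \<epsilon> / 2"
  have \<delta>: "0 < \<delta>" "\<delta> < 1" unfolding \<delta>_def using \<tau> \<epsilon> by (auto intro: le_less_trans[OF mult_le_one])
  define c where "c = log 2 (1 + 2 / (\<tau> * \<epsilon>))"
  have "eventually (\<lambda>n. c / real n < e / 4) sequentially"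
    using e by (intro order_tendstoD(2)[OF lim_const_over_n]) simp
  then obtain N where N: "\<And>n. n \<ge> N \<Longrightarrow> c / real n < e / 4" unfolding eventually_sequentially by blast
  let ?F = "\<lambda>\<delta>. limsup (\<lambda>n. ennreal (1 / real n) * Hs_eps \<delta> (P n))"
  have "ennreal (a1 / real n) * Hs_eps \<epsilon> (P1 n) + ennreal (a2 / real n) * Hs_eps \<epsilon> (P2 n)
      \<le> ennreal e + ennreal (1 / real n) * Hs_eps \<delta> (P n)" if n: "max 1 N \<le> n" for n
  proof -
    have "ennreal (a1 / real n) * Hs_eps \<epsilon> (P1 n) + ennreal (a2 / real n) * Hs_eps \<epsilon> (P2 n)
        \<le> ennreal (1 / real n) * Hs_eps \<delta> (P n) + (ennreal (c / real n) + ennreal (2 * u * \<tau> / \<epsilon>)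
          + ennreal (a1 / \<epsilon>) * Z_tail P1 u n + ennreal (a2 / \<epsilon>) * Z_tail P2 u n)"
      using Hs_eps_mixture_le_Z_tail[where P = P and ?P1.0 = P1 and ?P2.0 = P2 and n = n,
          OF mix a(1,2) \<tau> \<epsilon> u(1)] n
      unfolding \<delta>_def c_def by (simp add: add.assoc)
    also have "\<dots> \<le> ennreal (1 / real n) * Hs_eps \<delta> (P n) + ennreal e"
      using N[of n] u(2,3)[of n] n a
      by (intro add_left_mono ennreal_error_terms_le \<epsilon>(1) e u\<tau>) auto
    finally show ?thesis by (simp add: add.commute)
  qed
  then have "limsup (\<lambda>n. ennreal (a1 / real n) * Hs_eps \<epsilon> (P1 n) + ennreal (a2 / real n) * Hs_eps \<epsilon> (P2 n))
      \<le> limsup (\<lambda>n. ennreal e + ennreal (1 / real n) * Hs_eps \<delta> (P n))"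
    by (intro Limsup_mono eventually_sequentiallyI[of "max 1 N"])
  also have "\<dots> = ennreal e + ?F \<delta>" by (rule Limsup_const_add) simp
  also have "?F \<delta> \<le> (SUP \<delta>\<in>{0<..<1}. ?F \<delta>)" using \<delta> by (intro SUP_upper) auto
  finally show "limsup (\<lambda>n. ennreal (a1 / real n) * Hs_eps \<epsilon> (P1 n) + ennreal (a2 / real n) * Hs_eps \<epsilon> (P2 n))
      \<le> (SUP \<delta>\<in>{0<..<1}. ?F \<delta>) + ennreal e"
    by (simp add: add.commute add_left_mono)
qed

theorem theorem10:
  fixes P1 P2 P :: "nat \<Rightarrow> ('a::countable list \<times> 'b::countable list) pmf"
    and \<alpha>1 \<alpha>2 :: real
  assumes "general_source P1" and "general_source P2"
    and "unif_integrable P1" and "unif_integrable P2"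
    and "\<alpha>1 > 0" and "\<alpha>2 > 0" and "\<alpha>1 + \<alpha>2 = 1"
    and "\<And>n z. pmf (P n) z = \<alpha>1 * pmf (P1 n) z + \<alpha>2 * pmf (P2 n) z"
  shows "Hs P \<ge> Lim (at_right 0) (\<lambda>\<epsilon>. limsup (\<lambda>n.
            ennreal (\<alpha>1 / real n) * Hs_eps \<epsilon> (P1 n) + ennreal (\<alpha>2 / real n) * Hs_eps \<epsilon> (P2 n)))"
proof -
  define F where "F \<delta> = limsup (\<lambda>n. ennreal (1 / real n) * Hs_eps \<delta> (P n))" for \<delta>
  define R where "R \<epsilon> = limsup (\<lambda>n.
    ennreal (\<alpha>1 / real n) * Hs_eps \<epsilon> (P1 n) + ennreal (\<alpha>2 / real n) * Hs_eps \<epsilon> (P2 n))" for \<epsilon>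
  have "Hs P = (SUP \<delta>\<in>{0<..<1}. F \<delta>)"
    unfolding Hs_def F_def[symmetric]
    by (rule Lim_at_right_0_antimono, unfold F_def)
      (intro Limsup_mono always_eventually allI mult_left_mono Hs_eps_antimono, auto)
  moreover have "Lim (at_right 0) R = (SUP \<epsilon>\<in>{0<..<1}. R \<epsilon>)"
    by (rule Lim_at_right_0_antimono, unfold R_def)
      (intro Limsup_mono always_eventually allI add_mono mult_left_mono Hs_eps_antimono, auto)
  moreover have "R \<epsilon> \<le> (SUP \<delta>\<in>{0<..<1}. F \<delta>)" if "0 < \<epsilon>" "\<epsilon> < 1" for \<epsilon>
    unfolding R_def F_def using limsup_mixture_le[OF assms(8,5,6,7,3,4) that] .
  ultimately show ?thesis unfolding R_def[symmetric] by (auto intro: SUP_least)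
qed

end
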